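(* Let $H$ and $L$ be Hilbert spaces, let $T:H\to L$ be a linear operator, and let $\mathcal{A}\subset H$ be nonempty. Suppose $T$ is bi-Lipschitz from $\mathcal{A}$ to $L$ with constants $\alpha,\beta>0$, i.e. $\alpha\|f_1-f_2\|^2\le\|T(f_1-f_2)\|^2\le\beta\|f_1-f_2\|^2$ for all $f_1,f_2\in\mathcal{A}$. Let $f\in H$, $e\in L$ and $g=Tf+e$. Let $\epsilon,\delta>0$. Let $f_{opt}^\epsilon\in\mathcal{A}$ be any element with $\|g-Tf_{opt}^\epsilon\|^2\le\inf_{h\in\mathcal{A}}\|g-Th\|^2+\epsilon$. Let $f_{\mathcal{A}}^\delta\in\mathcal{A}$ be any element with $\|f-f_{\mathcal{A}}^\delta\|^2\le\inf_{h\in\mathcal{A}}\|f-h\|^2+\delta$, and set $\tilde e=g-Tf_{\mathcal{A}}^\delta$. Then \[ \|f_{\mathcal{A}}^\delta-f_{opt}^\epsilon\|\le\frac{1}{\sqrt{\alpha}}\left[2\|\tilde e\|+\sqrt{\epsilon}\right]. \]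
   Context: The elements $f_{opt}^\epsilon$ ("$\epsilon$-optimal estimates") and $f_{\mathcal{A}}^\delta$ (a "$\delta$-projection" of $f$ onto $\mathcal{A}$) exist since $\mathcal{A}$ is nonempty and $\epsilon,\delta>0$. *)

theory Defs
  imports "HOL-Analysis.Analysis"
begin

end

theory Submission
  imports Defs
begin

text \<open>An \<open>\<epsilon>\<close>-optimal estimate fits the data \<open>g\<close> as well as any element of \<open>A\<close>,
  in particular \<open>f_A\<close>, up to \<open>sqrt \<epsilon>\<close>. Since \<open>T (f_A - f_opt)\<close> is the difference
  of the two data misfits, the triangle inequality and the lower Lipschitz bound give the
  estimate.\<close>

lemma near_minimizer_norm_le:
  fixes d :: "'a \<Rightarrow> 'b::real_normed_vector"
  assumes "x \<in> A" and "\<epsilon> \<ge> 0"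
    and "(norm (d y))\<^sup>2 \<le> (INF h\<in>A. (norm (d h))\<^sup>2) + \<epsilon>"
  shows "norm (d y) \<le> norm (d x) + sqrt \<epsilon>"
proof (rule power2_le_imp_le)
  have "bdd_below ((\<lambda>h. (norm (d h))\<^sup>2) ` A)"
    by (rule bdd_belowI[where m = 0]) auto
  then have "(INF h\<in>A. (norm (d h))\<^sup>2) \<le> (norm (d x))\<^sup>2"
    using \<open>x \<in> A\<close> by (rule cINF_lower)
  also have "(norm (d x))\<^sup>2 + \<epsilon> \<le> (norm (d x) + sqrt \<epsilon>)\<^sup>2"
    using \<open>\<epsilon> \<ge> 0\<close> by (simp add: power2_sum)
  ultimately show "(norm (d y))\<^sup>2 \<le> (norm (d x) + sqrt \<epsilon>)\<^sup>2"
    using assms(3) by linarith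
  show "0 \<le> norm (d x) + sqrt \<epsilon>"
    using \<open>\<epsilon> \<ge> 0\<close> by simp
qed

lemma sqrt_mult_norm_le_of_sq_bound:
  fixes x :: "'a::real_normed_vector" and y :: "'b::real_normed_vector"
  assumes "\<alpha> * (norm x)\<^sup>2 \<le> (norm y)\<^sup>2"
  shows "sqrt \<alpha> * norm x \<le> norm y"
proof -
  have "sqrt (\<alpha> * (norm x)\<^sup>2) \<le> sqrt ((norm y)\<^sup>2)"
    using assms by (rule real_sqrt_le_mono)
  then show ?thesis
    by (simp add: real_sqrt_mult)
qed

theorem mainTheorem1:
  fixes T :: "'h::{real_inner,complete_space} \<Rightarrow> 'l::{real_inner,complete_space}"
    and A :: "'h set" and \<alpha> \<beta> \<epsilon> \<delta> :: real
    and f f_opt f_A :: 'h and e g :: 'l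
  assumes "linear T"
    and "A \<noteq> {}"
    and "\<alpha> > 0" and "\<beta> > 0"
    and "\<And>f1 f2. f1 \<in> A \<Longrightarrow> f2 \<in> A \<Longrightarrow>
           \<alpha> * (norm (f1 - f2))\<^sup>2 \<le> (norm (T (f1 - f2)))\<^sup>2 \<and>
           (norm (T (f1 - f2)))\<^sup>2 \<le> \<beta> * (norm (f1 - f2))\<^sup>2"
    and "g = T f + e"
    and "\<epsilon> > 0" and "\<delta> > 0"
    and "f_opt \<in> A"
    and "(norm (g - T f_opt))\<^sup>2 \<le> (INF h\<in>A. (norm (g - T h))\<^sup>2) + \<epsilon>"
    and "f_A \<in> A"
    and "(norm (f - f_A))\<^sup>2 \<le> (INF h\<in>A. (norm (f - h))\<^sup>2) + \<delta>"
  shows "norm (f_A - f_opt) \<le> (1 / sqrt \<alpha>) * (2 * norm (g - T f_A) + sqrt \<epsilon>)"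
proof -
  have misfit: "norm (g - T f_opt) \<le> norm (g - T f_A) + sqrt \<epsilon>"
    using near_minimizer_norm_le[where d = "\<lambda>h. g - T h"] assms(7,10,11) by simp
  have "sqrt \<alpha> * norm (f_A - f_opt) \<le> norm (T (f_A - f_opt))"
    using assms(5)[OF assms(11,9)] by (blast intro: sqrt_mult_norm_le_of_sq_bound)
  also have "T (f_A - f_opt) = (g - T f_opt) - (g - T f_A)"
    using linear_diff[OF assms(1)] by simp
  also have "norm \<dots> \<le> norm (g - T f_opt) + norm (g - T f_A)"
    by (rule norm_triangle_ineq4)
  finally have "sqrt \<alpha> * norm (f_A - f_opt) \<le> 2 * norm (g - T f_A) + sqrt \<epsilon>"
    using misfit by linarith
  then show ?thesis
    using assms(3) by (simp add: field_simps)
qed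

end
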